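(* Let $G=(V,E)$ be a simple undirected graph with $n=|V|$, let $0\le\epsilon\le1$, let $X\subseteq V$, and let $t=|T_\epsilon(X)|$ (assume $t>0$). Then $T_\epsilon(X)$ is an $\frac{n\epsilon}{t}$-near clique.
   Context: $\Gamma(v)$ denotes the set of neighbors of $v$. For $Y\subseteq V$ and $0\le\eta\le1$: $K_\eta(Y)=\{v\in V: |\Gamma(v)\cap Y|\ge(1-\eta)|Y|\}$, and $T_\epsilon(X)=K_\epsilon(K_{2\epsilon^2}(X))\cap K_{2\epsilon^2}(X)$. Each undirected edge $\{u,v\}$ is counted as two directed edges; for $\gamma\ge0$, a set $D\subseteq V$ is a $\gamma$-near clique if $|\{(u,v)\in D\times D:\{u,v\}\in E\}|\ge(1-\gamma)|D|(|D|-1)$. *)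

theory Defs
  imports Complex_Main
begin

definition simple_graph :: "'a set \<Rightarrow> 'a set set \<Rightarrow> bool" where
  "simple_graph V E \<longleftrightarrow> finite V \<and>
     (\<forall>e\<in>E. \<exists>u v. e = {u, v} \<and> u \<noteq> v \<and> u \<in> V \<and> v \<in> V)"

definition nbrs :: "'a set \<Rightarrow> 'a set set \<Rightarrow> 'a \<Rightarrow> 'a set" where
  "nbrs V E v = {u \<in> V. {u, v} \<in> E}"

definition Kset :: "'a set \<Rightarrow> 'a set set \<Rightarrow> real \<Rightarrow> 'a set \<Rightarrow> 'a set" where
  "Kset V E \<eta> Y = {v \<in> V. real (card (nbrs V E v \<inter> Y)) \<ge> (1 - \<eta>) * real (card Y)}"

definition Tset :: "'a set \<Rightarrow> 'a set set \<Rightarrow> real \<Rightarrow> 'a set \<Rightarrow> 'a set" where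
  "Tset V E \<epsilon> X = Kset V E \<epsilon> (Kset V E (2 * \<epsilon>^2) X) \<inter> Kset V E (2 * \<epsilon>^2) X"

text \<open>Ordered pairs (u,v) in D\<times>D whose underlying pair is an edge (each edge counted twice).\<close>
definition near_clique :: "'a set set \<Rightarrow> real \<Rightarrow> 'a set \<Rightarrow> bool" where
  "near_clique E \<gamma> D \<longleftrightarrow>
     real (card {(u, v) \<in> D \<times> D. {u, v} \<in> E}) \<ge> (1 - \<gamma>) * real (card D) * (real (card D) - 1)"

end

theory Submission
  imports Defs
begin

text \<open>Every vertex of \<open>T = T\<^sub>\<epsilon>(X)\<close> lies in \<open>K\<^sub>\<epsilon>(Y)\<close> for \<open>Y = K_{2\<epsilon>\<^sup>2}(X)\<close>,
  and \<open>T \<subseteq> Y\<close>; so it misses at most \<open>\<epsilon>|Y| \<le> \<epsilon>n\<close> vertices of \<open>Y\<close>, hence of \<open>T\<close>.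
  Summing these degrees over \<open>T\<close> gives at least \<open>t(t - \<epsilon>n) \<ge> (1 - \<epsilon>n/t) t (t - 1)\<close>
  ordered edge pairs inside \<open>T\<close>.\<close>

lemma nbrs_Int_eq:
  assumes "S \<subseteq> V"
  shows "nbrs V E u \<inter> S = {v \<in> S. {u, v} \<in> E}"
  using assms unfolding nbrs_def by (auto simp: insert_commute)

lemma card_nbrs_Int_subset_ge_if_Kset:
  assumes "u \<in> Kset V E \<eta> Y" and "S \<subseteq> Y" and "finite Y"
  shows "real (card (nbrs V E u \<inter> S)) \<ge> real (card S) - \<eta> * real (card Y)"
proof -
  let ?N = "nbrs V E u"
  have finS: "finite S" using assms(2,3) finite_subset by blast
  have in_Y: "real (card (?N \<inter> Y)) \<ge> (1 - \<eta>) * real (card Y)"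
    using assms(1) unfolding Kset_def by auto
  have "card (S - ?N) \<le> card (Y - ?N)"
    using assms(2,3) by (intro card_mono) auto
  also have "card (Y - ?N) = card Y - card (?N \<inter> Y)"
    using assms(3) by (simp add: card_Diff_subset_Int Int_commute)
  finally have missed: "real (card (S - ?N)) \<le> real (card Y) - real (card (?N \<inter> Y))"
    using card_mono[OF assms(3), of "?N \<inter> Y"] by auto
  have "card S = card (?N \<inter> S) + card (S - ?N)"
    using card_Int_Diff[OF finS, of ?N] by (simp add: Int_commute)
  then show ?thesis using missed in_Y by (simp add: algebra_simps)
qed

lemma card_edge_pairs_eq_sum_degrees:
  assumes "finite D"
  shows "card {(u, v) \<in> D \<times> D. {u, v} \<in> E} = (\<Sum>u\<in>D. card {v \<in> D. {u, v} \<in> E})"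
proof -
  have "{(u, v) \<in> D \<times> D. {u, v} \<in> E} = (\<Union>u\<in>D. Pair u ` {v \<in> D. {u, v} \<in> E})"
    by auto
  also have "card \<dots> = (\<Sum>u\<in>D. card (Pair u ` {v \<in> D. {u, v} \<in> E}))"
    using assms by (intro card_UN_disjoint) auto
  also have "\<dots> = (\<Sum>u\<in>D. card {v \<in> D. {u, v} \<in> E})"
    by (intro sum.cong refl card_image) (auto simp: inj_on_def)
  finally show ?thesis .
qed

lemma near_clique_if_min_degree:
  assumes "finite D" and "D \<noteq> {}"
    and min_degree: "\<And>u. u \<in> D \<Longrightarrow> real (card {v \<in> D. {u, v} \<in> E}) \<ge> real (card D) - \<delta>"
  shows "near_clique E (\<delta> / real (card D)) D"
proof -
  define t where "t = real (card D)"
  define m where "m = real (card {(u, v) \<in> D \<times> D. {u, v} \<in> E})"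
  have t_pos: "t > 0" using assms(1,2) by (simp add: t_def card_gt_0_iff)
  have "t * (t - \<delta>) = (\<Sum>u\<in>D. t - \<delta>)" by (simp add: t_def)
  also have "\<dots> \<le> (\<Sum>u\<in>D. real (card {v \<in> D. {u, v} \<in> E}))"
    using min_degree by (intro sum_mono) (simp add: t_def)
  finally have many_edges: "t * (t - \<delta>) \<le> m"
    unfolding m_def card_edge_pairs_eq_sum_degrees[OF assms(1)] by simp
  have "(1 - \<delta> / t) * t * (t - 1) = (t - \<delta>) * (t - 1)"
    using t_pos by (simp add: field_simps)
  also have "\<dots> \<le> m"
  proof (cases "\<delta> \<le> t")
    case True
    then have "(t - \<delta>) * (t - 1) \<le> (t - \<delta>) * t" by (intro mult_left_mono) auto
    with many_edges show ?thesis by (simp add: algebra_simps)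
  next
    case False
    then have "(t - \<delta>) * (t - 1) \<le> 0"
      using t_pos by (intro mult_nonpos_nonneg) (auto simp: t_def)
    then show ?thesis by (simp add: m_def)
  qed
  finally show ?thesis unfolding near_clique_def t_def m_def .
qed

theorem lemma5p3:
  fixes V :: "'a set" and E :: "'a set set" and X :: "'a set" and \<epsilon> :: real
  assumes "simple_graph V E"
    and "0 \<le> \<epsilon>" and "\<epsilon> \<le> 1"
    and "X \<subseteq> V"
    and "card (Tset V E \<epsilon> X) > 0"
  shows "near_clique E (real (card V) * \<epsilon> / real (card (Tset V E \<epsilon> X))) (Tset V E \<epsilon> X)"
proof -
  define Y where "Y = Kset V E (2 * \<epsilon>^2) X"
  define T where "T = Tset V E \<epsilon> X"
  have "finite V" using assms(1) by (simp add: simple_graph_def)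
  have "Y \<subseteq> V" unfolding Y_def Kset_def by auto
  have "T \<subseteq> Y" and T_Kset: "T \<subseteq> Kset V E \<epsilon> Y"
    unfolding T_def Tset_def Y_def by auto
  have "finite Y" using \<open>Y \<subseteq> V\<close> \<open>finite V\<close> finite_subset by blast
  have "card Y \<le> card V" using \<open>Y \<subseteq> V\<close> \<open>finite V\<close> card_mono by blast
  have "real (card {v \<in> T. {u, v} \<in> E}) \<ge> real (card T) - real (card V) * \<epsilon>" if "u \<in> T" for u
  proof -
    have "real (card T) - \<epsilon> * real (card Y) \<le> real (card (nbrs V E u \<inter> T))"
      using card_nbrs_Int_subset_ge_if_Kset[OF _ \<open>T \<subseteq> Y\<close> \<open>finite Y\<close>] T_Kset that by blast
    moreover have "\<epsilon> * real (card Y) \<le> real (card V) * \<epsilon>"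
      using \<open>card Y \<le> card V\<close> assms(2) by (simp add: mult_left_mono mult.commute)
    ultimately show ?thesis
      using nbrs_Int_eq[of T V E u] \<open>T \<subseteq> Y\<close> \<open>Y \<subseteq> V\<close> by auto
  qed
  moreover have "finite T" using \<open>T \<subseteq> Y\<close> \<open>finite Y\<close> finite_subset by blast
  moreover have "T \<noteq> {}" using assms(5) by (auto simp: T_def)
  ultimately show ?thesis
    using near_clique_if_min_degree[where D = T and \<delta> = "real (card V) * \<epsilon>"] by (simp add: T_def)
qed

end
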